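(* Let $m\ge1$ and let $M$ be the $m\times m$ matrix with entries in $\mathbb{Q}[x,y,t]$ given by $M_{i,j}=\sum_{k=0}^{m}\binom{x-i}{k}\binom{y-j}{k}t^k$ for $1\le i,j\le m$. Then $$\frac{\det(M)}{t^{\binom{m}{2}}}=\sum_{k=0}^{m}\binom{x-m-1+k}{k}\binom{y-m-1+k}{k}t^k.$$
   Context: For a polynomial (or integer) $z$ and an integer $k\ge0$, $\binom{z}{k}=\frac{z(z-1)\cdots(z-k+1)}{k!}$. *)

theory Defs
  imports "HOL-Computational_Algebra.Polynomial" "Jordan_Normal_Form.Determinant"
begin

text \<open>The ring Q[x,y,t] is modelled as nested univariate polynomials
  rat poly poly poly: t is the innermost variable, y the middle one, x the outermost.\<close>

type_synonym qxyt = "rat poly poly poly"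

definition varX :: qxyt where "varX = monom 1 1"
definition varY :: qxyt where "varY = [: monom 1 1 :]"
definition varT :: qxyt where "varT = [: [: monom 1 1 :] :]"

definition constQ :: "rat \<Rightarrow> qxyt" where "constQ c = [: [: [: c :] :] :]"

text \<open>Binomial coefficient of a polynomial: binom z k = z(z-1)...(z-k+1)/k!.
  (The library's gchoose is syntactically restricted to fields here.)\<close>
definition pbinom :: "qxyt \<Rightarrow> nat \<Rightarrow> qxyt" where
  "pbinom z k = constQ (1 / fact k) * (\<Prod>i<k. z - of_nat i)"

text \<open>The m x m matrix M with M_{i,j} for 1 <= i,j <= m, stored 0-based
  (0-based row index i corresponds to the paper's i+1).\<close>
definition matM :: "nat \<Rightarrow> qxyt mat" where
  "matM m = mat m m (\<lambda>(i, j). \<Sum>k = 0..m.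
      pbinom (varX - of_nat (i + 1)) k * pbinom (varY - of_nat (j + 1)) k * varT ^ k)"

end

theory Submission
  imports Defs "HOL-Computational_Algebra.Formal_Power_Series"
    "HOL-Computational_Algebra.Polynomial_Factorial"
begin

text \<open>Put u = x - m and v = y - m and reverse the order of rows and columns, which does not change
  the determinant. Then M = A(u) D A(v)^T with D = diag(1, t, ..., t^m) and A(u) the m x (m+1) matrix
  with entries binom(u + p, k). By Vandermonde's convolution the square part B(u) of A(u) (columns
  k < m) is the product of the unitriangular matrices (binom(p, s)) and (binom(u, k - s)), so
  det B(u) = 1; and the last column of A(u) is B(u) c(u) with c(u)_p = -binom(-u, m - p). Hence
  det M = det(diag(t^p) + t^m c(u) c(v)^T), which the matrix determinant lemma evaluates to
  t^binom(m,2) (1 + sum_{p<m} t^(m-p) binom(-u, m-p) binom(-v, m-p)), and binom(-u, k) =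
  (-1)^k binom(u + k - 1, k) gives the claimed sum. The computation is done over any field of
  characteristic 0 and transferred to Q[x,y,t] through its field of fractions.\<close>

lemma det_one_plus_rank_one:
  fixes a b :: "nat \<Rightarrow> 'a :: idom"
  shows "det (1\<^sub>m n + mat n n (\<lambda>(i, j). a i * b j)) = 1 + (\<Sum>i<n. a i * b i)"
proof -
  \<comment> \<open>Sylvester's identity: L U and U' L are both the block matrix [[1, col], [-row, 1]].\<close>
  define col where "col = mat n 1 (\<lambda>(i, _). a i)"
  define row where "row = mat 1 n (\<lambda>(_, j). b j)"
  have col: "col \<in> carrier_mat n 1" and row: "row \<in> carrier_mat 1 n"
    by (auto simp: col_def row_def)
  have col_row: "col * row = mat n n (\<lambda>(i, j). a i * b j)"
    by (rule eq_matI) (auto simp: col_def row_def scalar_prod_def)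
  have row_col: "row * col = mat 1 1 (\<lambda>_. \<Sum>i<n. a i * b i)"
    by (rule eq_matI) (auto simp: col_def row_def scalar_prod_def atLeast0LessThan mult.commute)
  define L where "L = four_block_mat (1\<^sub>m n) (0\<^sub>m n 1) (- row) (1\<^sub>m 1)"
  define U where "U = four_block_mat (1\<^sub>m n) col (0\<^sub>m 1 n) (1\<^sub>m 1 + row * col)"
  define U' where "U' = four_block_mat (1\<^sub>m n + col * row) col (0\<^sub>m 1 n) (1\<^sub>m 1)"
  have L: "L \<in> carrier_mat (n + 1) (n + 1)" and U: "U \<in> carrier_mat (n + 1) (n + 1)"
    and U': "U' \<in> carrier_mat (n + 1) (n + 1)"
    unfolding L_def U_def U'_def using col row by (auto intro!: four_block_carrier_mat)
  have "L * U = four_block_mat (1\<^sub>m n * 1\<^sub>m n + 0\<^sub>m n 1 * 0\<^sub>m 1 n)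
      (1\<^sub>m n * col + 0\<^sub>m n 1 * (1\<^sub>m 1 + row * col))
      (- row * 1\<^sub>m n + 1\<^sub>m 1 * 0\<^sub>m 1 n) (- row * col + 1\<^sub>m 1 * (1\<^sub>m 1 + row * col))"
    unfolding L_def U_def by (rule mult_four_block_mat) (use col row in auto)
  also have "\<dots> = four_block_mat (1\<^sub>m n) col (- row) (1\<^sub>m 1)"
    by (rule cong_four_block_mat; rule eq_matI) (auto simp: col_def row_def scalar_prod_def)
  also have "\<dots> = four_block_mat ((1\<^sub>m n + col * row) * 1\<^sub>m n + col * - row)
      ((1\<^sub>m n + col * row) * 0\<^sub>m n 1 + col * 1\<^sub>m 1)
      (0\<^sub>m 1 n * 1\<^sub>m n + 1\<^sub>m 1 * - row) (0\<^sub>m 1 n * 0\<^sub>m n 1 + 1\<^sub>m 1 * 1\<^sub>m 1)"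
    by (rule cong_four_block_mat; rule eq_matI) (auto simp: col_def row_def scalar_prod_def)
  also have "\<dots> = U' * L"
    unfolding L_def U'_def by (rule mult_four_block_mat[symmetric]) (use col row in auto)
  finally have "L * U = U' * L" .
  then have "det L * det U = det U' * det L"
    by (metis det_mult[OF L U] det_mult[OF U' L])
  moreover have "det L = 1"
    unfolding L_def using row by (subst det_four_block_mat_upper_right_zero[of _ n _ 1]) auto
  moreover have "det U = 1 + (\<Sum>i<n. a i * b i)"
    unfolding U_def using row col
    by (subst det_four_block_mat_lower_left_zero[of _ n _ 1]) (auto simp: row_col det_single)
  moreover have "det U' = det (1\<^sub>m n + col * row)"
    unfolding U'_def using row col by (subst det_four_block_mat_lower_left_zero[of _ n _ 1]) auto
  ultimately show ?thesis by (simp add: col_row)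
qed

lemma det_mat_diag: "det (mat_diag n d) = (\<Prod>i<n. d i)"
  by (subst det_upper_triangular[of _ n])
    (auto simp: mat_diag_def upper_triangular_def prod_list_diag_prod atLeast0LessThan)

lemma det_mat_diag_plus_rank_one:
  fixes d x y :: "nat \<Rightarrow> 'a :: field"
  assumes "\<And>i. i < n \<Longrightarrow> d i \<noteq> 0"
  shows "det (mat_diag n d + mat n n (\<lambda>(i, j). x i * y j))
    = (\<Prod>i<n. d i) * (1 + (\<Sum>i<n. x i * y i / d i))"
proof -
  have "mat_diag n d + mat n n (\<lambda>(i, j). x i * y j)
      = mat_diag n d * (1\<^sub>m n + mat n n (\<lambda>(i, j). x i / d i * y j))"
    by (subst mat_diag_mult_left[of _ n n]) (auto intro!: eq_matI simp: mat_diag_def assms field_simps)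
  moreover have "det (1\<^sub>m n + mat n n (\<lambda>(i, j). x i / d i * y j)) = 1 + (\<Sum>i<n. x i / d i * y i)"
    by (rule det_one_plus_rank_one)
  ultimately show ?thesis
    by (simp add: det_mult[of _ n] det_mat_diag)
qed

lemma det_permute_rows_cols:
  assumes A: "A \<in> carrier_mat n n" and p: "p permutes {0..<n}"
  shows "det (mat n n (\<lambda>(i, j). A $$ (p i, p j))) = det A"
proof -
  define B where "B = mat n n (\<lambda>(i, j). A $$ (p i, j))"
  have B: "B \<in> carrier_mat n n" by (simp add: B_def)
  have "mat n n (\<lambda>(i, j). A $$ (p i, p j))
      = transpose_mat (mat n n (\<lambda>(i, j). transpose_mat B $$ (p i, j)))"
    using p by (auto intro!: eq_matI simp: B_def permutes_in_image)
  then have "det (mat n n (\<lambda>(i, j). A $$ (p i, p j)))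
      = det (mat n n (\<lambda>(i, j). transpose_mat B $$ (p i, j)))"
    by (simp add: det_transpose[OF mat_carrier])
  also have "\<dots> = signof p * det B"
    using det_permute_rows[of "transpose_mat B" n p] B p by (simp add: det_transpose)
  also have "det B = signof p * det A"
    unfolding B_def by (rule det_permute_rows[OF A p])
  finally show ?thesis by (simp add: sign_def)
qed

lemma det_reverse_rows_cols:
  "det (mat n n (\<lambda>(i, j). f (n - Suc i) (n - Suc j))) = det (mat n n (\<lambda>(i, j). f i j))"
proof -
  define rev where "rev i = (if i < n then n - Suc i else i)" for i
  have "rev permutes {0..<n}"
    by (rule bij_imp_permutes[OF bij_betw_byWitness[where f' = rev]]) (auto simp: rev_def)
  moreover have "mat n n (\<lambda>(i, j). f (n - Suc i) (n - Suc j))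
      = mat n n (\<lambda>(i, j). mat n n (\<lambda>(i, j). f i j) $$ (rev i, rev j))"
    by (rule eq_matI) (auto simp: rev_def)
  ultimately show ?thesis by (simp add: det_permute_rows_cols)
qed

lemma mult_mat_diag_mult_transpose:
  assumes "A \<in> carrier_mat n k" and "B \<in> carrier_mat n' k"
  shows "A * mat_diag k d * transpose_mat B
    = mat n n' (\<lambda>(i, j). \<Sum>l<k. A $$ (i, l) * d l * B $$ (j, l))"
  using assms
  by (auto intro!: eq_matI simp: mat_diag_mult_right scalar_prod_def atLeast0LessThan)

lemma det_mult_mult_transpose_mult:
  assumes A: "A \<in> carrier_mat n n" and B: "B \<in> carrier_mat n n"
    and E: "E \<in> carrier_mat n k" and E': "E' \<in> carrier_mat n k" and D: "D \<in> carrier_mat k k"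
  shows "det (A * E * D * transpose_mat (B * E'))
    = det A * det (E * D * transpose_mat E') * det B"
proof -
  have ED: "E * D \<in> carrier_mat n k" using E D by simp
  have E'T: "transpose_mat E' \<in> carrier_mat k n" and BT: "transpose_mat B \<in> carrier_mat n n"
    using B E' by auto
  have G: "E * D * transpose_mat E' \<in> carrier_mat n n" using ED E'T by simp
  have "A * E * D * transpose_mat (B * E') = A * (E * D) * (transpose_mat E' * transpose_mat B)"
    by (simp add: transpose_mult[OF B E'] assoc_mult_mat[OF A E D])
  also have "\<dots> = A * (E * D) * transpose_mat E' * transpose_mat B"
    using A ED by (intro assoc_mult_mat[symmetric, OF _ E'T BT]) (rule mult_carrier_mat)
  also have "A * (E * D) * transpose_mat E' = A * (E * D * transpose_mat E')"
    by (rule assoc_mult_mat[OF A ED E'T])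
  finally have "A * E * D * transpose_mat (B * E') = A * (E * D * transpose_mat E') * transpose_mat B" .
  then show ?thesis
    using A B G BT by (simp add: det_mult[of _ n] det_transpose)
qed

definition id_append_col_mat :: "nat \<Rightarrow> (nat \<Rightarrow> 'a :: {zero, one}) \<Rightarrow> 'a mat" where
  "id_append_col_mat n c =
    mat n (Suc n) (\<lambda>(i, k). if k < n then (if i = k then 1 else 0) else c i)"

lemma id_append_col_mat_carrier: "id_append_col_mat n c \<in> carrier_mat n (Suc n)"
  by (simp add: id_append_col_mat_def)

lemma id_append_col_mat_diag_transpose:
  fixes c c' d :: "nat \<Rightarrow> 'a :: comm_ring_1"
  shows "id_append_col_mat n c * mat_diag (Suc n) d * transpose_mat (id_append_col_mat n c')
    = mat_diag n d + mat n n (\<lambda>(i, j). d n * c i * c' j)"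
proof -
  let ?E = "id_append_col_mat n c" and ?E' = "id_append_col_mat n c'"
  have "?E * mat_diag (Suc n) d * transpose_mat ?E'
      = mat n n (\<lambda>(i, j). \<Sum>l<Suc n. ?E $$ (i, l) * d l * ?E' $$ (j, l))"
    by (rule mult_mat_diag_mult_transpose) (rule id_append_col_mat_carrier)+
  also have "\<dots> = mat_diag n d + mat n n (\<lambda>(i, j). d n * c i * c' j)"
  proof (rule eq_matI)
    fix i j assume "i < dim_row (mat_diag n d + mat n n (\<lambda>(i, j). d n * c i * c' j))"
      and "j < dim_col (mat_diag n d + mat n n (\<lambda>(i, j). d n * c i * c' j))"
    then have i: "i < n" and j: "j < n" by auto
    have "(\<Sum>l<n. ?E $$ (i, l) * d l * ?E' $$ (j, l))
        = (\<Sum>l<n. if l = i then (if i = j then d i else 0) else 0)"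
      using i j by (intro sum.cong) (auto simp: id_append_col_mat_def)
    then show "mat n n (\<lambda>(i, j). \<Sum>l<Suc n. ?E $$ (i, l) * d l * ?E' $$ (j, l)) $$ (i, j)
      = (mat_diag n d + mat n n (\<lambda>(i, j). d n * c i * c' j)) $$ (i, j)"
      using i j by (simp add: mat_diag_def) (simp add: id_append_col_mat_def mult_ac)
  qed auto
  finally show ?thesis .
qed

lemma gbinomial_add_of_nat_eq_sum:
  fixes u :: "'a :: field_char_0"
  assumes "n < m"
  shows "(u + of_nat n) gchoose m = (\<Sum>j<m. ((u + of_nat n) gchoose j) * - ((- u) gchoose (m - j)))"
proof -
  have "(\<Sum>j\<le>m. ((u + of_nat n) gchoose j) * ((- u) gchoose (m - j))) = of_nat n gchoose m"
    using gbinomial_Vandermonde[of "u + of_nat n" "- u" m] by (simp add: atLeast0AtMost)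
  also have "\<dots> = 0"
    using assms by (simp flip: binomial_gbinomial)
  finally show ?thesis
    by (simp add: sum_negf eq_neg_iff_add_eq_0 add.commute flip: lessThan_Suc_atMost)
qed

definition gbinomial_mat :: "'a :: field_char_0 \<Rightarrow> nat \<Rightarrow> nat \<Rightarrow> 'a mat" where
  "gbinomial_mat u m n = mat m n (\<lambda>(p, k). (u + of_nat p) gchoose k)"

lemma gbinomial_mat_eq_pascal_mult_toeplitz:
  "gbinomial_mat u m n = mat m m (\<lambda>(p, s). of_nat (p choose s))
    * mat m n (\<lambda>(s, k). if s \<le> k then u gchoose (k - s) else 0)"
proof (rule eq_matI)
  fix p k assume "p < dim_row (mat m m (\<lambda>(p, s). of_nat (p choose s))
    * mat m n (\<lambda>(s, k). if s \<le> k then u gchoose (k - s) else 0))"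
    and "k < dim_col (mat m m (\<lambda>(p, s). of_nat (p choose s))
    * mat m n (\<lambda>(s, k). if s \<le> k then u gchoose (k - s) else 0))"
  then have p: "p < m" and k: "k < n" by auto
  define f where "f s = of_nat (p choose s) * (u gchoose (k - s))" for s
  have "(\<Sum>s<m. of_nat (p choose s) * (if s \<le> k then u gchoose (k - s) else 0))
      = (\<Sum>s<m. if s \<in> {..k} then f s else 0)"
    by (intro sum.cong) (auto simp: f_def)
  also have "\<dots> = (\<Sum>s\<in>{..<m} \<inter> {..k}. f s)"
    by (simp add: sum.inter_restrict)
  also have "\<dots> = (\<Sum>s\<le>k. f s)"
    using p by (intro sum.mono_neutral_cong) (auto simp: f_def)
  also have "\<dots> = (of_nat p + u) gchoose k"
    using gbinomial_Vandermonde[of "of_nat p" u k] by (simp add: f_def binomial_gbinomial atLeast0AtMost)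
  finally show "gbinomial_mat u m n $$ (p, k) = (mat m m (\<lambda>(p, s). of_nat (p choose s))
    * mat m n (\<lambda>(s, k). if s \<le> k then u gchoose (k - s) else 0)) $$ (p, k)"
    using p k by (simp add: gbinomial_mat_def scalar_prod_def atLeast0LessThan add.commute)
qed (auto simp: gbinomial_mat_def)

lemma det_gbinomial_mat: "det (gbinomial_mat u m m) = 1"
proof -
  have "det (mat m m (\<lambda>(p, s). of_nat (p choose s)) :: 'a mat) = 1"
    by (subst det_lower_triangular[of m]) (auto simp: prod_list_diag_prod)
  moreover have "det (mat m m (\<lambda>(s, k). if s \<le> k then u gchoose (k - s) else 0)) = 1"
    by (subst det_upper_triangular[of _ m]) (auto simp: upper_triangular_def prod_list_diag_prod)
  ultimately show ?thesis
    by (simp add: gbinomial_mat_eq_pascal_mult_toeplitz det_mult[of _ m])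
qed

lemma gbinomial_mat_eq_mult_id_append_col:
  "gbinomial_mat u m (Suc m) = gbinomial_mat u m m * id_append_col_mat m (\<lambda>j. - ((- u) gchoose (m - j)))"
proof (rule eq_matI)
  fix p k assume "p < dim_row (gbinomial_mat u m m * id_append_col_mat m (\<lambda>j. - ((- u) gchoose (m - j))))"
    and "k < dim_col (gbinomial_mat u m m * id_append_col_mat m (\<lambda>j. - ((- u) gchoose (m - j))))"
  then have p: "p < m" and k: "k \<le> m" by (auto simp: gbinomial_mat_def id_append_col_mat_def)
  show "gbinomial_mat u m (Suc m) $$ (p, k)
    = (gbinomial_mat u m m * id_append_col_mat m (\<lambda>j. - ((- u) gchoose (m - j)))) $$ (p, k)"
  proof (cases "k < m")
    case True
    have "(\<Sum>i<m. ((u + of_nat p) gchoose i) * (if i = k then 1 else 0))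
        = (\<Sum>i<m. if i = k then (u + of_nat p) gchoose k else 0)"
      by (intro sum.cong) auto
    then show ?thesis
      using p True by (simp add: gbinomial_mat_def id_append_col_mat_def scalar_prod_def atLeast0LessThan)
  next
    case False
    then show ?thesis
      using p k gbinomial_add_of_nat_eq_sum[OF p, of u]
      by (simp add: gbinomial_mat_def id_append_col_mat_def scalar_prod_def atLeast0LessThan)
  qed
qed (auto simp: gbinomial_mat_def id_append_col_mat_def)

lemma det_gbinomial_mat_diag_transpose:
  fixes u v :: "'a :: field_char_0" and d :: "nat \<Rightarrow> 'a"
  assumes "\<And>i. i < m \<Longrightarrow> d i \<noteq> 0"
  shows "det (gbinomial_mat u m (Suc m) * mat_diag (Suc m) d * transpose_mat (gbinomial_mat v m (Suc m)))
    = (\<Prod>i<m. d i) * (1 + (\<Sum>i<m. d m * ((- u) gchoose (m - i)) * ((- v) gchoose (m - i)) / d i))"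
proof -
  define c where "c w j = - ((- w) gchoose (m - j))" for w :: 'a and j
  have carrier: "gbinomial_mat w m m \<in> carrier_mat m m"
      "id_append_col_mat m (c w) \<in> carrier_mat m (Suc m)" for w by (simp_all add: gbinomial_mat_def id_append_col_mat_carrier)
  have "det (gbinomial_mat u m (Suc m) * mat_diag (Suc m) d * transpose_mat (gbinomial_mat v m (Suc m)))
      = det (id_append_col_mat m (c u) * mat_diag (Suc m) d * transpose_mat (id_append_col_mat m (c v)))"
    unfolding gbinomial_mat_eq_mult_id_append_col c_def[symmetric]
    by (simp add: det_mult_mult_transpose_mult[OF carrier(1) carrier(1) carrier(2) carrier(2) mat_diag_dim]
        det_gbinomial_mat)
  also have "\<dots> = det (mat_diag m d + mat m m (\<lambda>(i, j). d m * c u i * c v j))"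
    by (simp add: id_append_col_mat_diag_transpose)
  also have "\<dots> = (\<Prod>i<m. d i) * (1 + (\<Sum>i<m. d m * c u i * c v i / d i))"
    using det_mat_diag_plus_rank_one[of m d "\<lambda>i. d m * c u i" "c v"] assms by simp
  finally show ?thesis by (simp add: c_def)
qed

lemma det_gbinomial_sum_mat_eq_det_product:
  fixes X Y :: "'a :: field_char_0" and d :: "nat \<Rightarrow> 'a"
  shows "det (mat m m (\<lambda>(i, j). \<Sum>k = 0..m.
      ((X - of_nat (i + 1)) gchoose k) * ((Y - of_nat (j + 1)) gchoose k) * d k))
    = det (gbinomial_mat (X - of_nat m) m (Suc m) * mat_diag (Suc m) d
        * transpose_mat (gbinomial_mat (Y - of_nat m) m (Suc m)))"
proof -
  define f where "f p q = (\<Sum>k<Suc m. ((X - of_nat m + of_nat p) gchoose k) * d k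
    * ((Y - of_nat m + of_nat q) gchoose k))" for p q
  have carrier: "gbinomial_mat w m (Suc m) \<in> carrier_mat m (Suc m)" for w :: 'a
    by (simp add: gbinomial_mat_def)
  have "mat m m (\<lambda>(i, j). \<Sum>k = 0..m.
      ((X - of_nat (i + 1)) gchoose k) * ((Y - of_nat (j + 1)) gchoose k) * d k)
    = mat m m (\<lambda>(i, j). f (m - Suc i) (m - Suc j))"
    by (rule eq_matI)
      (auto simp: f_def of_nat_diff atLeast0AtMost lessThan_Suc_atMost algebra_simps)
  then have "det (mat m m (\<lambda>(i, j). \<Sum>k = 0..m.
      ((X - of_nat (i + 1)) gchoose k) * ((Y - of_nat (j + 1)) gchoose k) * d k))
    = det (mat m m (\<lambda>(i, j). f i j))"
    by (simp add: det_reverse_rows_cols)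
  also have "mat m m (\<lambda>(i, j). f i j) = gbinomial_mat (X - of_nat m) m (Suc m) * mat_diag (Suc m) d
      * transpose_mat (gbinomial_mat (Y - of_nat m) m (Suc m))"
    unfolding mult_mat_diag_mult_transpose[OF carrier carrier]
    by (rule eq_matI) (auto simp: f_def gbinomial_mat_def intro!: sum.cong)
  finally show ?thesis .
qed

lemma prod_lessThan_power_eq_power_choose_two: "(\<Prod>i<m. t ^ i) = t ^ (m choose 2)"
  by (induction m) (simp_all add: numeral_2_eq_2 power_add mult.commute)

lemma gbinomial_minus_mult_gbinomial_minus:
  fixes a b :: "'a :: field_char_0"
  shows "((- a) gchoose k) * ((- b) gchoose k)
    = ((a + of_nat k - 1) gchoose k) * ((b + of_nat k - 1) gchoose k)"
  by (simp add: gbinomial_minus mult_ac flip: power_mult_distrib)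

theorem det_gbinomial_sum_mat:
  fixes X Y T :: "'a :: field_char_0"
  assumes T: "T \<noteq> 0"
  shows "det (mat m m (\<lambda>(i, j). \<Sum>k = 0..m.
      ((X - of_nat (i + 1)) gchoose k) * ((Y - of_nat (j + 1)) gchoose k) * T ^ k))
    = T ^ (m choose 2) * (\<Sum>k = 0..m.
      ((X - of_nat m - 1 + of_nat k) gchoose k) * ((Y - of_nat m - 1 + of_nat k) gchoose k) * T ^ k)"
proof -
  define u where "u = X - of_nat m"
  define v where "v = Y - of_nat m"
  define g where "g k = ((- u) gchoose k) * ((- v) gchoose k) * T ^ k" for k
  have g_eq: "g k = ((X - of_nat m - 1 + of_nat k) gchoose k) * ((Y - of_nat m - 1 + of_nat k) gchoose k)
      * T ^ k" for k
    unfolding g_def gbinomial_minus_mult_gbinomial_minus by (simp add: u_def v_def algebra_simps)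
  have "det (mat m m (\<lambda>(i, j). \<Sum>k = 0..m.
      ((X - of_nat (i + 1)) gchoose k) * ((Y - of_nat (j + 1)) gchoose k) * T ^ k))
    = (\<Prod>i<m. T ^ i) * (1 + (\<Sum>i<m. T ^ m * ((- u) gchoose (m - i)) * ((- v) gchoose (m - i)) / T ^ i))"
    unfolding det_gbinomial_sum_mat_eq_det_product u_def v_def
    using T by (intro det_gbinomial_mat_diag_transpose) simp
  also have "(\<Sum>i<m. T ^ m * ((- u) gchoose (m - i)) * ((- v) gchoose (m - i)) / T ^ i)
      = (\<Sum>i<m. g (m - i))"
    using T by (intro sum.cong) (auto simp: g_def power_diff)
  also have "\<dots> = (\<Sum>i<m. g (Suc i))"
    using sum.nat_diff_reindex[of "\<lambda>i. g (Suc i)" m] by (simp add: Suc_diff_Suc)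
  also have "1 + \<dots> = (\<Sum>k\<le>m. g k)"
    unfolding lessThan_Suc_atMost[symmetric] sum.lessThan_Suc_shift by (simp add: g_def)
  finally show ?thesis
    by (simp add: prod_lessThan_power_eq_power_choose_two g_eq atLeast0AtMost)
qed

instance fract :: ("{idom, ring_char_0}") field_char_0
  by standard (auto intro!: injI simp: of_nat_fract eq_fract)

interpretation to_fract: comm_ring_hom to_fract
  by unfold_locales simp_all

lemma to_fract_pbinom: "to_fract (pbinom z k) = to_fract z gchoose k"
proof -
  have "constQ (1 / fact k) * of_nat (fact k) = 1"
    by (simp add: constQ_def of_nat_poly flip: one_pCons)
  then have "to_fract (constQ (1 / fact k)) = 1 / fact k"
    by (metis to_fract.hom_mult to_fract.hom_one to_fract.hom_of_nat nonzero_eq_divide_eq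
        fact_nonzero of_nat_fact of_nat_eq_0_iff)
  then show ?thesis
    by (simp add: pbinom_def gbinomial_prod_rev to_fract.hom_prod to_fract.hom_of_nat atLeast0LessThan)
qed

theorem lemma6:
  fixes m :: nat
  assumes "m \<ge> 1"
  shows "varT ^ (m choose 2) dvd det (matM m)
       \<and> det (matM m) div varT ^ (m choose 2) =
           (\<Sum>k = 0..m. pbinom (varX - of_nat m - 1 + of_nat k) k
                        * pbinom (varY - of_nat m - 1 + of_nat k) k * varT ^ k)"
proof -
  define S where "S = (\<Sum>k = 0..m. pbinom (varX - of_nat m - 1 + of_nat k) k
    * pbinom (varY - of_nat m - 1 + of_nat k) k * varT ^ k)"
  have T: "varT \<noteq> 0" by (simp add: varT_def)
  have "to_fract (det (matM m)) = det (map_mat to_fract (matM m))"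
    by (rule to_fract.hom_det[symmetric])
  also have "map_mat to_fract (matM m) = mat m m (\<lambda>(i, j). \<Sum>k = 0..m.
      ((to_fract varX - of_nat (i + 1)) gchoose k) * ((to_fract varY - of_nat (j + 1)) gchoose k)
      * to_fract varT ^ k)"
    by (rule eq_matI)
      (auto simp: matM_def to_fract.hom_sum to_fract_pbinom to_fract.hom_power to_fract.hom_of_nat)
  also have "det \<dots> = to_fract varT ^ (m choose 2) * (\<Sum>k = 0..m.
      ((to_fract varX - of_nat m - 1 + of_nat k) gchoose k)
      * ((to_fract varY - of_nat m - 1 + of_nat k) gchoose k) * to_fract varT ^ k)"
    using T by (intro det_gbinomial_sum_mat) simp
  also have "\<dots> = to_fract (varT ^ (m choose 2) * S)"
    by (simp add: S_def to_fract.hom_sum to_fract_pbinom to_fract.hom_power to_fract.hom_of_nat)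
  finally have "det (matM m) = varT ^ (m choose 2) * S" by (simp only: to_fract_eq_iff)
  then show ?thesis using T by (simp add: S_def)
qed

end
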